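(* (1) If $\Sigma;\Gamma\vdash\tau:m$ and $\tau$ contains no equality guard, then there exists a context $\Gamma_{\min}$ (over the same variables as $\Gamma$) with $\Sigma;\Gamma_{\min}\vdash\tau:m$ and $\Gamma_{\min}\le\Gamma'$ for every context $\Gamma'$ over those variables with $\Sigma;\Gamma'\vdash\tau:m$. (2) If $\Sigma_0\vdash\sigma\dashv\Sigma$ where the definition block $\sigma$ contains no equality guard, then there exists a minimal signature $\Sigma_{\min}$ such that $\Sigma_0\vdash\sigma\dashv\Sigma_{\min}$, i.e. for every $\Sigma'$ with $\Sigma_0\vdash\sigma\dashv\Sigma'$, each parameter mode in $\Sigma_{\min}$ is $\le$ the corresponding parameter mode in $\Sigma'$.
   Context: Type expressions: $\tau,\kappa ::= \alpha \mid \mathsf{float}\mid\mathsf{int}\mid\mathsf{bool}\mid t(\tau_1,\dots,\tau_n)\mid \tau\to\kappa\mid \tau_1\times\dots\times\tau_n\mid \forall\alpha.\tau\mid\exists\alpha.\tau\mid (\tau \text{ with } \kappa_1=\kappa_2)$ (equality guard). Datatypes: $A ::= C_1\text{ of }\tau_1\mid\dots\mid C_n\text{ of }\tau_n$ (boxed variant) $\mid C\text{ of }\tau$ [unboxed] $\mid \{l_1:\tau_1;\dots;l_n:\tau_n\}$ (boxed record, fields possibly mutable) $\mid \{l:\tau\}$ [unboxed] $\mid \tau$ (type synonym). A definition block $\sigma$ is a list of mutually recursive definitions $t_i(\vec\alpha_i):=A_i$, $1\le i\le n$. Modes $\mathsf{Ind}<\mathsf{Sep}<\mathsf{Deepsep}$;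 composition $\mathsf{Ind}\circ m=\mathsf{Ind}$, $\mathsf{Sep}\circ m=m$, $\mathsf{Deepsep}\circ m=\mathsf{Deepsep}$. Contexts $\Gamma=\alpha_1:m_1,\dots$ ordered pointwise (same variables). A mode signature $\Sigma$ is a list of entries $t(\alpha_1:m_1,\dots,\alpha_n:m_n)$. Type-level judgment $\Sigma;\Gamma\vdash\tau:m$: (variable) $(\alpha:m)\in\Gamma$ gives $\alpha:m$; (constructor) $t(\alpha_1:m_1,\dots,\alpha_n:m_n)\in\Sigma$ and $\tau_i:m\circ m_i$ for all $i$ give $t(\tau_1,\dots,\tau_n):m$; (arrow) $\tau:m\circ\mathsf{Ind}$, $\kappa:m\circ\mathsf{Ind}$ give $\tau\to\kappa:m$; (product) $\tau_i:m\circ\mathsf{Ind}$ for all $i$ gives $\tau_1\times\dots\times\tau_n:m$; (forall) $\Sigma;\Gamma,\alpha:n\vdash\tau:m$ for some $n$ gives $\Sigma;\Gamma\vdash\forall\alpha.\tau:m$; (exists) $\Sigma;\Gamma,\alpha:\mathsf{Ind}\vdash\tau:m$ gives $\Sigma;\Gamma\vdash\exists\alpha.\tau:m$; (conversion) $\tau:m$ and $m\ge n$ give $\tau:n$; (guard) if for every $\Gamma'\ge\Gamma$ with $\Sigma;\Gamma'\vdash\kappa_1=\kappa_2$ we have $\Sigma;\Gamma'\vdash\tau:m$, then $\Sigma;\Gamma\vdash(\tau\text{ with }\kappa_1=\kappa_2):m$, where $\Sigma;\Gamma\vdash\tau_1=\tau_2$ means for all $m$, $\Sigma;\Gamma\vdash\tau_1:m\iff\Sigma;\Gamma\vdash\tau_2:m$.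 Datatype judgment $\Sigma;\Gamma\vdash_{\mathsf{decl}}A$: boxed variants and boxed records are always accepted; an unboxed variant $C\text{ of }\tau$, an unboxed record $\{l:\tau\}$, or a type synonym $\tau$ is accepted iff $\Sigma;\Gamma\vdash\tau:\mathsf{Sep}$. Block judgment: $\Sigma_0\vdash(t_i(\vec\alpha_i):=A_i)_{1\le i\le n}\dashv\Sigma_{\mathsf{block}}$ holds when $\Sigma_{\mathsf{block}}=t_1(\vec{\alpha_1}:\vec{m_1}),\dots,t_n(\vec{\alpha_n}:\vec{m_n})$ for some modes $\vec{m_i}$ and, for each $i$, $\Sigma_0,\Sigma_{\mathsf{block}};\vec{\alpha_i}:\vec{m_i}\vdash_{\mathsf{decl}}A_i$. *)

theory Defs
  imports Main
begin

datatype mode = Ind | Sep | Deepsep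

fun mode_rank :: "mode \<Rightarrow> nat" where
  "mode_rank Ind = 0" | "mode_rank Sep = 1" | "mode_rank Deepsep = 2"

instantiation mode :: linorder
begin
definition less_eq_mode :: "mode \<Rightarrow> mode \<Rightarrow> bool" where
  "less_eq_mode a b \<longleftrightarrow> mode_rank a \<le> mode_rank b"
definition less_mode :: "mode \<Rightarrow> mode \<Rightarrow> bool" where
  "less_mode a b \<longleftrightarrow> mode_rank a < mode_rank b"
instance
proof
  fix x y :: mode
  show "x \<le> y \<Longrightarrow> y \<le> x \<Longrightarrow> x = y"
    by (cases x; cases y; simp add: less_eq_mode_def)
qed (auto simp: less_eq_mode_def less_mode_def)
end

fun mode_comp :: "mode \<Rightarrow> mode \<Rightarrow> mode" where
  "mode_comp Ind m = Ind"
| "mode_comp Sep m = m"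
| "mode_comp Deepsep m = Deepsep"

type_synonym tvar = string
type_synonym tname = string

datatype ty =
    TVar tvar
  | TFloat
  | TInt
  | TBool
  | TCon tname "ty list"
  | TArrow ty ty
  | TProd "ty list"
  | TForall tvar ty
  | TExists tvar ty
  | TWith ty ty ty                 \<comment> \<open>(tau with kappa_1 = kappa_2)\<close>

fun no_guard :: "ty \<Rightarrow> bool" where
  "no_guard (TVar a) = True"
| "no_guard TFloat = True"
| "no_guard TInt = True"
| "no_guard TBool = True"
| "no_guard (TCon t ts) = (\<forall>x\<in>set ts. no_guard x)"
| "no_guard (TArrow a b) = (no_guard a \<and> no_guard b)"
| "no_guard (TProd ts) = (\<forall>x\<in>set ts. no_guard x)"
| "no_guard (TForall a t) = no_guard t"
| "no_guard (TExists a t) = no_guard t"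
| "no_guard (TWith t k1 k2) = False"

type_synonym ctx = "tvar \<rightharpoonup> mode"

definition ctx_le :: "ctx \<Rightarrow> ctx \<Rightarrow> bool" where
  "ctx_le G G' \<longleftrightarrow> dom G = dom G' \<and>
     (\<forall>a m m'. G a = Some m \<longrightarrow> G' a = Some m' \<longrightarrow> m \<le> m')"

type_synonym sig = "(tname \<times> (tvar \<times> mode) list) list"

text \<open>Because of the (non-monotone) guard rule, the judgment cannot be given as an
  inductive predicate in HOL; since every rule other than conversion derives a judgment
  about tau from judgments about strict subterms of tau, it is defined by structural
  recursion on tau.  Each clause is: the unique syntax-directed rule for the head
  constructor, concluding at some mode m', followed by the conversion rule (m' >= m).\<close>

function has_mode :: "sig \<Rightarrow> ctx \<Rightarrow> ty \<Rightarrow> mode \<Rightarrow> bool" where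
  "has_mode S G (TVar a) m = (\<exists>m'. G a = Some m' \<and> m \<le> m')"
| "has_mode S G TFloat m = False"
| "has_mode S G TInt m = False"
| "has_mode S G TBool m = False"
| "has_mode S G (TCon t ts) m =
     (\<exists>m'. m \<le> m' \<and> (\<exists>ps. (t, ps) \<in> set S \<and> length ts = length ps \<and>
        (\<forall>(x, p) \<in> set (zip ts ps). has_mode S G x (mode_comp m' (snd p)))))"
| "has_mode S G (TArrow a b) m =
     (\<exists>m'. m \<le> m' \<and> has_mode S G a (mode_comp m' Ind) \<and> has_mode S G b (mode_comp m' Ind))"
| "has_mode S G (TProd ts) m =
     (\<exists>m'. m \<le> m' \<and> (\<forall>x\<in>set ts. has_mode S G x (mode_comp m' Ind)))"
| "has_mode S G (TForall a t) m =
     (\<exists>m'. m \<le> m' \<and> (\<exists>n. has_mode S (G(a \<mapsto> n)) t m'))"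
| "has_mode S G (TExists a t) m =
     (\<exists>m'. m \<le> m' \<and> has_mode S (G(a \<mapsto> Ind)) t m')"
| "has_mode S G (TWith t k1 k2) m =
     (\<exists>m'. m \<le> m' \<and> (\<forall>G'. ctx_le G G' \<longrightarrow>
        (\<forall>n. has_mode S G' k1 n \<longleftrightarrow> has_mode S G' k2 n) \<longrightarrow> has_mode S G' t m'))"
  by pat_completeness auto
termination
  by (relation "measure (\<lambda>(S, G, t, m). size t)")
     (auto dest!: set_zip_leftD simp: less_Suc_eq_le intro: size_list_estimation')

type_synonym cname = string
type_synonym label = string

datatype decl =
    Variant "(cname \<times> ty) list"              \<comment> \<open>boxed variant\<close>
  | UVariant cname ty                         \<comment> \<open>[unboxed] C of tau\<close>
  | Record "(label \<times> bool \<times> ty) list"      \<comment> \<open>boxed record; bool = mutable flag\<close>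
  | URecord label ty                          \<comment> \<open>[unboxed] {l : tau}\<close>
  | Synonym ty

fun decl_no_guard :: "decl \<Rightarrow> bool" where
  "decl_no_guard (Variant cs) = (\<forall>(c, t)\<in>set cs. no_guard t)"
| "decl_no_guard (UVariant c t) = no_guard t"
| "decl_no_guard (Record fs) = (\<forall>(l, mut, t)\<in>set fs. no_guard t)"
| "decl_no_guard (URecord l t) = no_guard t"
| "decl_no_guard (Synonym t) = no_guard t"

fun decl_ok :: "sig \<Rightarrow> ctx \<Rightarrow> decl \<Rightarrow> bool" where
  "decl_ok S G (Variant cs) = True"
| "decl_ok S G (Record fs) = True"
| "decl_ok S G (UVariant c t) = has_mode S G t Sep"
| "decl_ok S G (URecord l t) = has_mode S G t Sep"
| "decl_ok S G (Synonym t) = has_mode S G t Sep"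

type_synonym block = "(tname \<times> tvar list \<times> decl) list"

definition block_ok :: "sig \<Rightarrow> block \<Rightarrow> sig \<Rightarrow> bool" where
  "block_ok S0 bl Sb \<longleftrightarrow> length Sb = length bl \<and>
     (\<forall>i<length bl. fst (Sb ! i) = fst (bl ! i) \<and>
        map fst (snd (Sb ! i)) = fst (snd (bl ! i)) \<and>
        decl_ok (S0 @ Sb) (map_of (snd (Sb ! i))) (snd (snd (bl ! i))))"

definition block_no_guard :: "block \<Rightarrow> bool" where
  "block_no_guard bl \<longleftrightarrow> (\<forall>(t, as, A)\<in>set bl. decl_no_guard A)"

definition sig_le :: "sig \<Rightarrow> sig \<Rightarrow> bool" where
  "sig_le S S' \<longleftrightarrow> list_all2 (\<lambda>(t, ps) (t', ps'). t = t' \<and>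
      list_all2 (\<lambda>(a, m) (a', m'). a = a' \<and> m \<le> m') ps ps') S S'"

definition sig_wf :: "sig \<Rightarrow> bool" where
  "sig_wf S \<longleftrightarrow> distinct (map fst S)"

end

theory Submission
  imports Defs
begin

text \<open>Without equality guards every rule of the mode judgment is monotone in the context and
  in the signature, so two derivations of \<open>\<tau> : m\<close>, one under \<open>(\<Sigma>\<^sub>1, \<Gamma>\<^sub>1)\<close> and one under
  \<open>(\<Sigma>\<^sub>2, \<Gamma>\<^sub>2)\<close>, combine into a derivation under their pointwise minimum; the conversion
  rule lowers both to a common mode at every node. Hence the contexts (resp. block
  signatures) admitting a derivation are closed under pointwise meets. Modes form a finite
  chain and only finitely many coordinates matter (the free variables of \<open>\<tau>\<close>, resp. the
  parameters of the block), so finitely many meets give an element that is least in every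
  coordinate; variables not free in \<open>\<tau>\<close> are simply set to \<open>Ind\<close>.\<close>

instance mode :: finite
proof
  show "finite (UNIV :: mode set)"
    by (rule finite_subset[of _ "{Ind, Sep, Deepsep}"]) (use mode.exhaust in auto)
qed

lemma Ind_le [simp]: "Ind \<le> m"
  by (cases m) (simp_all add: less_eq_mode_def)

lemma mode_comp_mono: "a \<le> a' \<Longrightarrow> b \<le> b' \<Longrightarrow> mode_comp a b \<le> mode_comp a' b'"
  by (cases a; cases a'; cases b; cases b'; simp add: less_eq_mode_def)

lemma has_mode_conversion: "has_mode S G t m \<Longrightarrow> m' \<le> m \<Longrightarrow> has_mode S G t m'"
  by (cases t) (auto intro: order_trans)

lemma has_mode_comp_conversion:
  "has_mode S G t (mode_comp m' k') \<Longrightarrow> m \<le> m' \<Longrightarrow> k \<le> k' \<Longrightarrow> has_mode S G t (mode_comp m k)"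
  using has_mode_conversion mode_comp_mono by blast

lemma has_mode_TCon:
  "has_mode S G (TCon t ts) m \<longleftrightarrow> (\<exists>m'\<ge>m. \<exists>ps. (t, ps) \<in> set S \<and>
     list_all2 (\<lambda>x p. has_mode S G x (mode_comp m' (snd p))) ts ps)"
  by (auto simp: list_all2_iff)

fun fv :: "ty \<Rightarrow> tvar set" where
  "fv (TVar a) = {a}"
| "fv TFloat = {}"
| "fv TInt = {}"
| "fv TBool = {}"
| "fv (TCon t ts) = (\<Union>x\<in>set ts. fv x)"
| "fv (TArrow a b) = fv a \<union> fv b"
| "fv (TProd ts) = (\<Union>x\<in>set ts. fv x)"
| "fv (TForall a t) = fv t - {a}"
| "fv (TExists a t) = fv t - {a}"
| "fv (TWith t k1 k2) = fv t \<union> fv k1 \<union> fv k2"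

lemma finite_fv: "finite (fv t)"
  by (induction t) auto

lemma has_mode_agree_on_fv:
  "no_guard t \<Longrightarrow> (\<And>a. a \<in> fv t \<Longrightarrow> G a = G' a) \<Longrightarrow> has_mode S G t m \<Longrightarrow> has_mode S G' t m"
proof (induction t arbitrary: G G' m)
  case (TCon t ts)
  from TCon.prems(3) obtain m' ps where "m \<le> m'" "(t, ps) \<in> set S"
    and args: "list_all2 (\<lambda>x p. has_mode S G x (mode_comp m' (snd p))) ts ps"
    unfolding has_mode_TCon by blast
  have "has_mode S G' x n" if "x \<in> set ts" "has_mode S G x n" for x n
    using TCon.IH[OF that(1) _ _ that(2)] TCon.prems(1,2) that(1) by auto
  with args have "list_all2 (\<lambda>x p. has_mode S G' x (mode_comp m' (snd p))) ts ps"
    by (blast intro: list.rel_mono_strong)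
  moreover note \<open>m \<le> m'\<close> \<open>(t, ps) \<in> set S\<close>
  ultimately show ?case
    unfolding has_mode_TCon by blast
next
  case (TArrow t1 t2)
  have "has_mode S G' t1 n" if "has_mode S G t1 n" for n
    using TArrow.IH(1)[OF _ _ that] TArrow.prems(1,2) by simp
  moreover have "has_mode S G' t2 n" if "has_mode S G t2 n" for n
    using TArrow.IH(2)[OF _ _ that] TArrow.prems(1,2) by simp
  ultimately show ?case
    using TArrow.prems(3) by auto
next
  case (TProd ts)
  have "has_mode S G' x n" if "x \<in> set ts" "has_mode S G x n" for x n
    using TProd.IH[OF that(1) _ _ that(2)] TProd.prems(1,2) that(1) by auto
  then show ?case
    using TProd.prems(3) by auto
next
  case (TForall a t)
  from TForall.prems(3) obtain m' n where "m \<le> m'" and body: "has_mode S (G(a \<mapsto> n)) t m'"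
    by auto
  have agree: "(G(a \<mapsto> n)) b = (G'(a \<mapsto> n)) b" if "b \<in> fv t" for b
    using TForall.prems(2) that by simp
  have "has_mode S (G'(a \<mapsto> n)) t m'"
    using TForall.IH[OF _ agree body] TForall.prems(1) by (simp add: fun_upd_def)
  with \<open>m \<le> m'\<close> show ?case
    by auto
next
  case (TExists a t)
  from TExists.prems(3) obtain m' where "m \<le> m'" and body: "has_mode S (G(a \<mapsto> Ind)) t m'"
    by auto
  have agree: "(G(a \<mapsto> Ind)) b = (G'(a \<mapsto> Ind)) b" if "b \<in> fv t" for b
    using TExists.prems(2) that by simp
  have "has_mode S (G'(a \<mapsto> Ind)) t m'"
    using TExists.IH[OF _ agree body] TExists.prems(1) by (simp add: fun_upd_def)
  with \<open>m \<le> m'\<close> show ?case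
    by auto
qed auto

section \<open>Pointwise meets of contexts and signatures\<close>

definition ctx_meet :: "ctx \<Rightarrow> ctx \<Rightarrow> ctx" where
  "ctx_meet G1 G2 a =
     (case (G1 a, G2 a) of (Some m1, Some m2) \<Rightarrow> Some (min m1 m2) | _ \<Rightarrow> None)"

lemma ctx_meet_upd: "ctx_meet (G1(a \<mapsto> m1)) (G2(a \<mapsto> m2)) = (ctx_meet G1 G2)(a \<mapsto> min m1 m2)"
  by (rule ext) (simp add: ctx_meet_def)

lemma dom_ctx_meet: "dom (ctx_meet G1 G2) = dom G1 \<inter> dom G2"
  by (auto simp: ctx_meet_def split: option.splits)

lemma the_ctx_meet: "dom G1 = dom G2 \<Longrightarrow> the (ctx_meet G1 G2 a) = min (the (G1 a)) (the (G2 a))"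
  by (cases "G1 a"; cases "G2 a") (auto simp: ctx_meet_def)

definition params_meet :: "(tvar \<times> mode) list \<Rightarrow> (tvar \<times> mode) list \<Rightarrow> (tvar \<times> mode) list" where
  "params_meet ps1 ps2 = map2 (\<lambda>(a, m1) (_, m2). (a, min m1 m2)) ps1 ps2"

definition sig_meet :: "sig \<Rightarrow> sig \<Rightarrow> sig" where
  "sig_meet S1 S2 = map2 (\<lambda>(t, ps1) (_, ps2). (t, params_meet ps1 ps2)) S1 S2"

lemma length_params_meet [simp]: "length (params_meet ps1 ps2) = min (length ps1) (length ps2)"
  by (simp add: params_meet_def)

lemma nth_params_meet [simp]:
  "j < length ps1 \<Longrightarrow> j < length ps2 \<Longrightarrow>
     params_meet ps1 ps2 ! j = (fst (ps1 ! j), min (snd (ps1 ! j)) (snd (ps2 ! j)))"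
  by (simp add: params_meet_def case_prod_beta)

lemma params_meet_self: "params_meet ps ps = ps"
  by (induction ps) (auto simp: params_meet_def)

lemma map_of_params_meet:
  "map fst ps1 = map fst ps2 \<Longrightarrow> map_of (params_meet ps1 ps2) = ctx_meet (map_of ps1) (map_of ps2)"
proof (induction ps1 arbitrary: ps2)
  case Nil
  then show ?case by (auto simp: params_meet_def ctx_meet_def)
next
  case (Cons p ps1)
  then obtain a m1 m2 ps2' where p: "p = (a, m1)" and ps2: "ps2 = (a, m2) # ps2'"
    and tail: "map fst ps1 = map fst ps2'"
    by (cases p; cases ps2) auto
  have "map_of (params_meet ((a, m1) # ps1) ((a, m2) # ps2')) =
      (map_of (params_meet ps1 ps2'))(a \<mapsto> min m1 m2)"
    by (simp add: params_meet_def)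
  also have "\<dots> = (ctx_meet (map_of ps1) (map_of ps2'))(a \<mapsto> min m1 m2)"
    using Cons.IH[OF tail] by simp
  also have "\<dots> = ctx_meet (map_of ((a, m1) # ps1)) (map_of ((a, m2) # ps2'))"
    by (simp add: ctx_meet_upd)
  finally show ?case
    unfolding p ps2 .
qed

lemma length_sig_meet [simp]: "length (sig_meet S1 S2) = min (length S1) (length S2)"
  by (simp add: sig_meet_def)

lemma nth_sig_meet [simp]:
  "i < length S1 \<Longrightarrow> i < length S2 \<Longrightarrow>
     sig_meet S1 S2 ! i = (fst (S1 ! i), params_meet (snd (S1 ! i)) (snd (S2 ! i)))"
  by (simp add: sig_meet_def case_prod_beta)

lemma map_fst_params_meet:
  "map fst ps1 = map fst ps2 \<Longrightarrow> map fst (params_meet ps1 ps2) = map fst ps1"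
  by (induction ps1 arbitrary: ps2) (auto simp: params_meet_def Cons_eq_map_conv)

lemma sig_meet_self: "sig_meet S S = S"
  by (induction S) (auto simp: sig_meet_def params_meet_self)

lemma sig_meet_append_same: "sig_meet (S0 @ S1) (S0 @ S2) = S0 @ sig_meet S1 S2"
  using sig_meet_self[of S0] by (simp add: sig_meet_def)

lemma sig_meet_mem:
  assumes "map fst S1 = map fst S2" "distinct (map fst S1)"
    and "(t, ps1) \<in> set S1" "(t, ps2) \<in> set S2"
  shows "(t, params_meet ps1 ps2) \<in> set (sig_meet S1 S2)"
proof -
  have len: "length S1 = length S2"
    using assms(1) by (metis length_map)
  obtain i where i: "i < length S1" "S1 ! i = (t, ps1)"
    using assms(3) by (metis in_set_conv_nth)
  obtain k where k: "k < length S2" "S2 ! k = (t, ps2)"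
    using assms(4) by (metis in_set_conv_nth)
  have "map fst S1 ! i = map fst S1 ! k"
    using i k len assms(1) by (metis fst_conv nth_map)
  then have "i = k"
    using nth_eq_iff_index_eq[OF assms(2), of i k] i k len by simp
  then show ?thesis
    using i k len by (metis fst_conv snd_conv nth_sig_meet length_sig_meet min.idem nth_mem)
qed

lemma has_mode_meet:
  assumes names: "map fst S1 = map fst S2" "distinct (map fst S1)"
  shows "no_guard t \<Longrightarrow> has_mode S1 G1 t m \<Longrightarrow> has_mode S2 G2 t m \<Longrightarrow>
    has_mode (sig_meet S1 S2) (ctx_meet G1 G2) t m"
proof (induction t arbitrary: G1 G2 m)
  case (TVar a)
  then show ?case
    by (auto simp: ctx_meet_def)
next
  case (TCon t ts)
  from TCon.prems(2) obtain m1 ps1 where "m \<le> m1" "(t, ps1) \<in> set S1"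
    and args1: "list_all2 (\<lambda>x p. has_mode S1 G1 x (mode_comp m1 (snd p))) ts ps1"
    unfolding has_mode_TCon by blast
  from TCon.prems(3) obtain m2 ps2 where "m \<le> m2" "(t, ps2) \<in> set S2"
    and args2: "list_all2 (\<lambda>x p. has_mode S2 G2 x (mode_comp m2 (snd p))) ts ps2"
    unfolding has_mode_TCon by blast
  have len: "length ps1 = length ts" "length ps2 = length ts"
    using list_all2_lengthD[OF args1] list_all2_lengthD[OF args2] by simp_all
  have "list_all2 (\<lambda>x p. has_mode (sig_meet S1 S2) (ctx_meet G1 G2) x (mode_comp m (snd p)))
      ts (params_meet ps1 ps2)"
  proof (rule list_all2_all_nthI)
    show "length ts = length (params_meet ps1 ps2)"
      using len by simp
    fix j
    assume j: "j < length ts"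
    have "has_mode S1 G1 (ts ! j) (mode_comp m (min (snd (ps1 ! j)) (snd (ps2 ! j))))"
      using list_all2_nthD[OF args1 j] \<open>m \<le> m1\<close> by (rule has_mode_comp_conversion) simp
    moreover have "has_mode S2 G2 (ts ! j) (mode_comp m (min (snd (ps1 ! j)) (snd (ps2 ! j))))"
      using list_all2_nthD[OF args2 j] \<open>m \<le> m2\<close> by (rule has_mode_comp_conversion) simp
    ultimately show "has_mode (sig_meet S1 S2) (ctx_meet G1 G2) (ts ! j)
        (mode_comp m (snd (params_meet ps1 ps2 ! j)))"
      using TCon.IH[OF nth_mem[OF j]] TCon.prems(1) j len by simp
  qed
  moreover have "(t, params_meet ps1 ps2) \<in> set (sig_meet S1 S2)"
    using sig_meet_mem[OF names \<open>(t, ps1) \<in> set S1\<close> \<open>(t, ps2) \<in> set S2\<close>] .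
  ultimately show ?case
    unfolding has_mode_TCon by blast
next
  case (TArrow t1 t2)
  from TArrow.prems(2) obtain m1 where "m \<le> m1"
    and "has_mode S1 G1 t1 (mode_comp m1 Ind)" "has_mode S1 G1 t2 (mode_comp m1 Ind)"
    by auto
  then have h1: "has_mode S1 G1 t1 (mode_comp m Ind)" "has_mode S1 G1 t2 (mode_comp m Ind)"
    by (auto elim: has_mode_comp_conversion)
  from TArrow.prems(3) obtain m2 where "m \<le> m2"
    and "has_mode S2 G2 t1 (mode_comp m2 Ind)" "has_mode S2 G2 t2 (mode_comp m2 Ind)"
    by auto
  then have h2: "has_mode S2 G2 t1 (mode_comp m Ind)" "has_mode S2 G2 t2 (mode_comp m Ind)"
    by (auto elim: has_mode_comp_conversion)
  show ?case
    using TArrow.IH(1)[OF _ h1(1) h2(1)] TArrow.IH(2)[OF _ h1(2) h2(2)] TArrow.prems(1) by auto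
next
  case (TProd ts)
  have "has_mode (sig_meet S1 S2) (ctx_meet G1 G2) x (mode_comp m Ind)" if x: "x \<in> set ts" for x
  proof -
    from TProd.prems(2,3) x obtain m1 m2 where "m \<le> m1" "m \<le> m2"
      "has_mode S1 G1 x (mode_comp m1 Ind)" "has_mode S2 G2 x (mode_comp m2 Ind)"
      by auto
    then have "has_mode S1 G1 x (mode_comp m Ind)" "has_mode S2 G2 x (mode_comp m Ind)"
      by (auto elim: has_mode_comp_conversion)
    then show ?thesis
      using TProd.IH[OF x] TProd.prems(1) x by simp
  qed
  then show ?case
    by auto
next
  case (TForall a t)
  from TForall.prems(2,3) obtain m1 n1 m2 n2 where "m \<le> m1" "m \<le> m2"
    "has_mode S1 (G1(a \<mapsto> n1)) t m1" "has_mode S2 (G2(a \<mapsto> n2)) t m2"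
    by auto
  then have "has_mode S1 (G1(a \<mapsto> n1)) t m" "has_mode S2 (G2(a \<mapsto> n2)) t m"
    by (auto elim: has_mode_conversion)
  then have "has_mode (sig_meet S1 S2) (ctx_meet (G1(a \<mapsto> n1)) (G2(a \<mapsto> n2))) t m"
    using TForall.IH TForall.prems(1) by simp
  then show ?case
    unfolding ctx_meet_upd by auto
next
  case (TExists a t)
  from TExists.prems(2,3) obtain m1 m2 where "m \<le> m1" "m \<le> m2"
    "has_mode S1 (G1(a \<mapsto> Ind)) t m1" "has_mode S2 (G2(a \<mapsto> Ind)) t m2"
    by auto
  then have "has_mode S1 (G1(a \<mapsto> Ind)) t m" "has_mode S2 (G2(a \<mapsto> Ind)) t m"
    by (auto elim: has_mode_conversion)
  then have "has_mode (sig_meet S1 S2) (ctx_meet (G1(a \<mapsto> Ind)) (G2(a \<mapsto> Ind))) t m"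
    using TExists.IH TExists.prems(1) by simp
  then show ?case
    unfolding ctx_meet_upd by auto
qed auto

section \<open>Least contexts and least block signatures\<close>

lemma ex_coordinatewise_least:
  fixes val :: "'c \<Rightarrow> 'x \<Rightarrow> 'm::{finite, linorder}"
  assumes "x0 \<in> V" "finite C"
    and closed: "\<And>x y. x \<in> V \<Longrightarrow> y \<in> V \<Longrightarrow> meet x y \<in> V"
    and below: "\<And>c x y. c \<in> C \<Longrightarrow> x \<in> V \<Longrightarrow> y \<in> V \<Longrightarrow> val c (meet x y) \<le> min (val c x) (val c y)"
  shows "\<exists>z\<in>V. \<forall>c\<in>C. \<forall>x\<in>V. val c z \<le> val c x"
  using \<open>finite C\<close> below
proof (induction C rule: finite_induct)
  case empty
  then show ?case
    using \<open>x0 \<in> V\<close> by blast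
next
  case (insert c C)
  then obtain z where z: "z \<in> V" "\<forall>c'\<in>C. \<forall>x\<in>V. val c' z \<le> val c' x"
    by blast
  have "Min (val c ` V) \<in> val c ` V"
    by (rule Min_in) (use \<open>x0 \<in> V\<close> in auto)
  then obtain w where "w \<in> V" "val c w = Min (val c ` V)"
    by auto
  then have w: "w \<in> V" "\<forall>x\<in>V. val c w \<le> val c x"
    by simp_all
  have "meet z w \<in> V"
    using closed z(1) w(1) .
  moreover have "val c' (meet z w) \<le> val c' x" if "c' \<in> insert c C" "x \<in> V" for c' x
  proof -
    have "val c' (meet z w) \<le> val c' z" "val c' (meet z w) \<le> val c' w"
      using insert.prems[OF that(1) z(1) w(1)] by simp_all
    then show ?thesis
      using that z(2) w(2) by (cases "c' = c") (auto intro: order_trans)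
  qed
  ultimately show ?case
    by blast
qed

theorem has_mode_least_ctx:
  assumes "sig_wf S" "no_guard t" "has_mode S G t m"
  shows "\<exists>Gmin. dom Gmin = dom G \<and> has_mode S Gmin t m \<and>
           (\<forall>G'. dom G' = dom G \<and> has_mode S G' t m \<longrightarrow> ctx_le Gmin G')"
proof -
  define V where "V = {G'. dom G' = dom G \<and> has_mode S G' t m}"
  \<comment> \<open>Outside \<open>dom G\<close> the coordinate \<open>the (G' a)\<close> is the same junk value for all \<open>G' \<in> V\<close>.\<close>
  have "\<exists>z\<in>V. \<forall>a\<in>fv t. \<forall>G'\<in>V. the (z a) \<le> the (G' a)"
  proof (rule ex_coordinatewise_least[where meet = ctx_meet])
    show "G \<in> V"
      using assms(3) by (simp add: V_def)
    show "finite (fv t)"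
      by (rule finite_fv)
    show "ctx_meet G1 G2 \<in> V" if "G1 \<in> V" "G2 \<in> V" for G1 G2
      using that has_mode_meet[of S S t G1 m G2] assms(1,2)
      by (simp add: V_def dom_ctx_meet sig_wf_def sig_meet_self)
    show "the (ctx_meet G1 G2 a) \<le> min (the (G1 a)) (the (G2 a))" if "G1 \<in> V" "G2 \<in> V" for a G1 G2
      using that by (simp add: V_def the_ctx_meet)
  qed
  then obtain z where "z \<in> V" and least: "\<forall>a\<in>fv t. \<forall>G'\<in>V. the (z a) \<le> the (G' a)"
    by blast
  define Gmin where "Gmin a = (if a \<in> fv t then z a else map_option (\<lambda>_. Ind) (z a))" for a
  have "dom Gmin = dom z"
    by (auto simp: Gmin_def dom_def)
  with \<open>z \<in> V\<close> have "dom Gmin = dom G"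
    by (simp add: V_def)
  moreover have "has_mode S Gmin t m"
    using has_mode_agree_on_fv[OF assms(2), of z Gmin] \<open>z \<in> V\<close> by (simp add: Gmin_def V_def)
  moreover have "ctx_le Gmin G'" if "G' \<in> V" for G'
    unfolding ctx_le_def
  proof (intro conjI allI impI)
    show "dom Gmin = dom G'"
      using that \<open>dom Gmin = dom G\<close> by (simp add: V_def)
    fix a n n'
    assume "Gmin a = Some n" "G' a = Some n'"
    then show "n \<le> n'"
      using least that by (cases "a \<in> fv t") (force simp: Gmin_def)+
  qed
  ultimately show ?thesis
    by (auto simp: V_def)
qed

lemma decl_ok_meet:
  assumes "map fst S1 = map fst S2" "distinct (map fst S1)" "decl_no_guard d"
    and "decl_ok S1 G1 d" "decl_ok S2 G2 d"
  shows "decl_ok (sig_meet S1 S2) (ctx_meet G1 G2) d"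
  using assms by (cases d) (simp_all add: has_mode_meet)

lemma block_ok_names:
  assumes "block_ok S0 bl S"
  shows "map fst S = map fst bl"
    and "i < length bl \<Longrightarrow> map fst (snd (S ! i)) = fst (snd (bl ! i))"
  using assms by (auto simp: block_ok_def intro: nth_equalityI)

lemma block_ok_meet:
  assumes "distinct (map fst S0 @ map fst bl)" "block_no_guard bl"
    and S1: "block_ok S0 bl S1" and S2: "block_ok S0 bl S2"
  shows "block_ok S0 bl (sig_meet S1 S2)"
  unfolding block_ok_def
proof (intro conjI allI impI)
  have len: "length S1 = length bl" "length S2 = length bl"
    using S1 S2 by (simp_all add: block_ok_def)
  then show "length (sig_meet S1 S2) = length bl"
    by simp
  fix i
  assume i: "i < length bl"
  have params: "map fst (snd (S1 ! i)) = fst (snd (bl ! i))" "map fst (snd (S2 ! i)) = fst (snd (bl ! i))"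
    using block_ok_names(2)[OF S1 i] block_ok_names(2)[OF S2 i] .
  have meet_i: "sig_meet S1 S2 ! i = (fst (S1 ! i), params_meet (snd (S1 ! i)) (snd (S2 ! i)))"
    using i len by simp
  show "fst (sig_meet S1 S2 ! i) = fst (bl ! i)"
    using meet_i S1 i by (simp add: block_ok_def)
  show "map fst (snd (sig_meet S1 S2 ! i)) = fst (snd (bl ! i))"
    using meet_i params by (simp add: map_fst_params_meet)
  have "decl_no_guard (snd (snd (bl ! i)))"
    using assms(2) i by (auto simp: block_no_guard_def dest!: nth_mem)
  moreover have "map fst (S0 @ S1) = map fst (S0 @ S2)" "distinct (map fst (S0 @ S1))"
    using block_ok_names(1)[OF S1] block_ok_names(1)[OF S2] assms(1) by simp_all
  ultimately have "decl_ok (sig_meet (S0 @ S1) (S0 @ S2))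
      (ctx_meet (map_of (snd (S1 ! i))) (map_of (snd (S2 ! i)))) (snd (snd (bl ! i)))"
    using decl_ok_meet S1 S2 i by (simp add: block_ok_def)
  then show "decl_ok (S0 @ sig_meet S1 S2) (map_of (snd (sig_meet S1 S2 ! i))) (snd (snd (bl ! i)))"
    using meet_i params by (simp add: sig_meet_append_same map_of_params_meet)
qed

lemma sig_le_if_param_modes_le:
  assumes "block_ok S0 bl S" "block_ok S0 bl S'"
    and "\<And>i j. i < length bl \<Longrightarrow> j < length (fst (snd (bl ! i))) \<Longrightarrow>
           snd (snd (S ! i) ! j) \<le> snd (snd (S' ! i) ! j)"
  shows "sig_le S S'"
  unfolding sig_le_def
proof (rule list_all2_all_nthI)
  show "length S = length S'"
    using assms(1,2) by (simp add: block_ok_def)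
  fix i
  assume "i < length S"
  then have i: "i < length bl"
    using assms(1) by (simp add: block_ok_def)
  have names: "fst (S ! i) = fst (S' ! i)" "map fst (snd (S ! i)) = map fst (snd (S' ! i))"
    using assms(1,2) i by (simp_all add: block_ok_def)
  have "list_all2 (\<lambda>(a, m) (a', m'). a = a' \<and> m \<le> m') (snd (S ! i)) (snd (S' ! i))"
  proof (rule list_all2_all_nthI)
    show len: "length (snd (S ! i)) = length (snd (S' ! i))"
      using map_eq_imp_length_eq[OF names(2)] .
    fix j
    assume j: "j < length (snd (S ! i))"
    have "fst (snd (S ! i) ! j) = fst (snd (S' ! i) ! j)"
      using arg_cong[OF names(2), of "\<lambda>xs. xs ! j"] j len by simp
    moreover have "j < length (fst (snd (bl ! i)))"
      using j by (simp flip: block_ok_names(2)[OF assms(1) i])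
    ultimately show "(\<lambda>(a, m) (a', m'). a = a' \<and> m \<le> m') (snd (S ! i) ! j) (snd (S' ! i) ! j)"
      using assms(3)[OF i] by (simp add: case_prod_beta)
  qed
  with names(1) show "(\<lambda>(t, ps) (t', ps'). t = t' \<and>
      list_all2 (\<lambda>(a, m) (a', m'). a = a' \<and> m \<le> m') ps ps') (S ! i) (S' ! i)"
    by (simp add: case_prod_beta)
qed

theorem block_least_sig:
  assumes "distinct (map fst S0 @ map fst bl)" "block_no_guard bl" "block_ok S0 bl Sb"
  shows "\<exists>Smin. block_ok S0 bl Smin \<and> (\<forall>S'. block_ok S0 bl S' \<longrightarrow> sig_le Smin S')"
proof -
  define V where "V = {S. block_ok S0 bl S}"
  define C where "C = (SIGMA i:{..<length bl}. {..<length (fst (snd (bl ! i)))})"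
  define param_mode where "param_mode = (\<lambda>(i, j) (S :: sig). snd (snd (S ! i) ! j))"
  have "\<exists>z\<in>V. \<forall>c\<in>C. \<forall>S\<in>V. param_mode c z \<le> param_mode c S"
  proof (rule ex_coordinatewise_least[where meet = sig_meet])
    show "Sb \<in> V"
      using assms(3) by (simp add: V_def)
    show "finite C"
      by (simp add: C_def)
    show "sig_meet S1 S2 \<in> V" if "S1 \<in> V" "S2 \<in> V" for S1 S2
      using block_ok_meet[OF assms(1,2)] that by (simp add: V_def)
    show "param_mode c (sig_meet S1 S2) \<le> min (param_mode c S1) (param_mode c S2)"
      if "c \<in> C" "S1 \<in> V" "S2 \<in> V" for c S1 S2
    proof -
      obtain i j where c: "c = (i, j)" and i: "i < length bl" and j: "j < length (fst (snd (bl ! i)))"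
        using \<open>c \<in> C\<close> by (auto simp: C_def)
      have S1: "block_ok S0 bl S1" and S2: "block_ok S0 bl S2"
        using that(2,3) by (simp_all add: V_def)
      then have "length S1 = length bl" "length S2 = length bl"
        by (simp_all add: block_ok_def)
      moreover have "j < length (snd (S1 ! i))"
        using j by (simp flip: block_ok_names(2)[OF S1 i])
      moreover have "j < length (snd (S2 ! i))"
        using j by (simp flip: block_ok_names(2)[OF S2 i])
      ultimately show ?thesis
        using c i by (simp add: param_mode_def)
    qed
  qed
  then obtain z where "z \<in> V" and least: "\<forall>c\<in>C. \<forall>S\<in>V. param_mode c z \<le> param_mode c S"
    by blast
  have "sig_le z S'" if "block_ok S0 bl S'" for S'
    using sig_le_if_param_modes_le[of S0 bl z S'] \<open>z \<in> V\<close> that least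
    by (simp add: V_def C_def param_mode_def)
  with \<open>z \<in> V\<close> show ?thesis
    by (auto simp: V_def)
qed

theorem mainTheorem6:
  shows "(\<forall>S G t m. sig_wf S \<and> no_guard t \<and> has_mode S G t m \<longrightarrow>
            (\<exists>Gmin. dom Gmin = dom G \<and> has_mode S Gmin t m \<and>
               (\<forall>G'. dom G' = dom G \<and> has_mode S G' t m \<longrightarrow> ctx_le Gmin G')))
       \<and> (\<forall>S0 bl Sb. distinct (map fst S0 @ map fst bl) \<and> block_no_guard bl \<and> block_ok S0 bl Sb \<longrightarrow>
            (\<exists>Smin. block_ok S0 bl Smin \<and> (\<forall>S'. block_ok S0 bl S' \<longrightarrow> sig_le Smin S')))"
  using has_mode_least_ctx block_least_sig by blast

end
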